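(* Let $m$ be a positive integer, let $s \in S_m$ be a cycle of length $k < m$, and let $a$ be a positive divisor of $k$ with $(k,a) \neq (4,2)$. Then there exists $x \in S_m$ such that $\langle s \rangle \cap \langle s \rangle^x = \langle s^a \rangle$. *)

theory Defs
  imports "HOL-Algebra.Sym_Groups"
begin

definition conj_set :: "('a, 'b) monoid_scheme \<Rightarrow> 'a set \<Rightarrow> 'a \<Rightarrow> 'a set"
  where "conj_set G H x = (\<lambda>h. inv\<^bsub>G\<^esub> x \<otimes>\<^bsub>G\<^esub> h \<otimes>\<^bsub>G\<^esub> x) ` H"

end

theory Submission
  imports Defs "HOL-Algebra.Multiplicative_Group"
begin

(* Write s = (c_0 c_1 ... c_(k-1)). If x commutes with s^a and x s^l = s^j x forces a | j, then
   <s> and its conjugate by x meet exactly in <s^a>. For a = k take x = (c_0 p) with p outside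
   the support of s. For a < k take the cycle x = (c_0 c_a c_(2a) ...), which acts on indices
   modulo k by i |-> i + a if a | i and fixes the other indices. If x s^l = s^j x and a does not
   divide l, comparing both sides at the indices 0 and -l gives k | 2a, so k = 2a and a >= 3;
   then the index 1 or 2 gives k | a, which is impossible. For k = 4, a = 2 neither index is
   available, and indeed x s = s^3 x there. *)

lemma (in group) inv_conj_eq_iff:
  assumes "x \<in> carrier G" "g \<in> carrier G" "h \<in> carrier G"
  shows "inv x \<otimes> g \<otimes> x = h \<longleftrightarrow> g \<otimes> x = x \<otimes> h"
  using assms by (simp add: m_assoc inv_solve_left')

lemma (in group) generate_inter_conj_set_eq_generate_pow:
  fixes a :: nat
  assumes fin: "finite (carrier G)" and s: "s \<in> carrier G" and x: "x \<in> carrier G"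
    and comm: "x \<otimes> s [^] a = s [^] a \<otimes> x"
    and dvd: "\<And>j l::nat. x \<otimes> s [^] l = s [^] j \<otimes> x \<Longrightarrow> a dvd j"
  shows "generate G {s} \<inter> conj_set G (generate G {s}) x = generate G {s [^] a}"
proof -
  have gen_s: "generate G {s} = {s [^] n | n::nat. True}"
    using generate_pow_on_finite_carrier[OF fin s] by simp
  have gen_sa: "generate G {s [^] a} = {s [^] (a * n) | n::nat. True}"
    using generate_pow_on_finite_carrier[OF fin nat_pow_closed[OF s]] s by (simp add: nat_pow_pow)
  have conj_fixed: "inv x \<otimes> s [^] (a * t) \<otimes> x = s [^] (a * t)" for t
  proof -
    have "(s [^] a) [^] t \<otimes> x = x \<otimes> (s [^] a) [^] t"
      by (rule group_commutes_pow) (use comm s x in auto)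
    then show ?thesis
      using s x by (subst inv_conj_eq_iff) (auto simp: nat_pow_pow)
  qed
  show ?thesis
  proof (intro equalityI subsetI)
    fix h assume "h \<in> generate G {s} \<inter> conj_set G (generate G {s}) x"
    then obtain l j :: nat where "h = s [^] l" and hj: "h = inv x \<otimes> s [^] j \<otimes> x"
      unfolding conj_set_def gen_s by auto
    then have "inv x \<otimes> s [^] j \<otimes> x = s [^] l" by simp
    then have "x \<otimes> s [^] l = s [^] j \<otimes> x"
      using s x by (subst (asm) inv_conj_eq_iff) auto
    then have "a dvd j" by (rule dvd)
    then obtain t where "j = a * t" ..
    then show "h \<in> generate G {s [^] a}"
      using hj conj_fixed gen_sa by auto
  next
    fix h assume "h \<in> generate G {s [^] a}"
    then obtain t where "h = s [^] (a * t)" using gen_sa by auto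
    then show "h \<in> generate G {s} \<inter> conj_set G (generate G {s}) x"
      using conj_fixed[of t, symmetric] unfolding conj_set_def gen_s by auto
  qed
qed

lemma sym_group_pow: "p [^]\<^bsub>sym_group n\<^esub> (k::nat) = p ^^ k"
  by (induction k) (simp_all add: sym_group_one sym_group_mult funpow_Suc_right del: funpow.simps)

lemma finite_carrier_sym_group: "finite (carrier (sym_group n))"
  by (simp add: sym_group_def finite_permutations)

corollary sym_group_generate_inter_conj_set_eq_generate_pow:
  assumes "s \<in> carrier (sym_group n)" "x \<in> carrier (sym_group n)"
    and "x \<circ> s ^^ a = s ^^ a \<circ> x"
    and "\<And>j l. x \<circ> s ^^ l = s ^^ j \<circ> x \<Longrightarrow> a dvd j"
  shows "generate (sym_group n) {s} \<inter> conj_set (sym_group n) (generate (sym_group n) {s}) x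
           = generate (sym_group n) {s [^]\<^bsub>sym_group n\<^esub> a}"
proof -
  interpret group "sym_group n" by (rule sym_group_is_group)
  show ?thesis
    by (rule generate_inter_conj_set_eq_generate_pow[OF finite_carrier_sym_group assms(1,2)])
      (use assms(3,4) in \<open>simp_all add: sym_group_pow sym_group_mult\<close>)
qed

lemma cycle_of_list_in_sym_group:
  "set cs \<subseteq> {1..n} \<Longrightarrow> cycle_of_list cs \<in> carrier (sym_group n)"
  using cycle_permutes permutes_subset by (fastforce simp: sym_group_carrier)

lemma transpose_in_sym_group:
  "p \<in> {1..n} \<Longrightarrow> q \<in> {1..n} \<Longrightarrow> Transposition.transpose p q \<in> carrier (sym_group n)"
  by (simp add: sym_group_carrier permutes_swap_id)

lemma cycle_of_list_funpow_nth_mod: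
  assumes "distinct cs" "cs \<noteq> []"
  shows "(cycle_of_list cs ^^ l) (cs ! (i mod length cs)) = cs ! ((i + l) mod length cs)"
proof -
  have "(cycle_of_list cs ^^ l) (cs ! (i mod length cs)) = rotate l cs ! (i mod length cs)"
    using cyclic_rotation[of cs l] assms by (metis length_greater_0_conv mod_less_divisor nth_map)
  also have "\<dots> = cs ! ((i + l) mod length cs)"
    using assms by (simp add: nth_rotate) (metis add.commute mod_add_left_eq)
  finally show ?thesis .
qed

lemma cycle_of_list_funpow_outside: "y \<notin> set cs \<Longrightarrow> (cycle_of_list cs ^^ l) y = y"
  by (induction l) (simp_all add: id_outside_supp)

lemma nth_mod_length_eq_iff:
  assumes "distinct cs" "cs \<noteq> []"
  shows "cs ! (i mod length cs) = cs ! (i' mod length cs)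
           \<longleftrightarrow> i mod length cs = i' mod length cs"
  using assms by (simp add: nth_eq_iff_index_eq)

lemma fun_eq_on_cycleI:
  assumes "\<And>i. f (cs ! (i mod length cs)) = g (cs ! (i mod length cs))"
    and "\<And>y. y \<notin> set cs \<Longrightarrow> f y = g y"
  shows "f = g"
proof
  fix y show "f y = g y"
  proof (cases "y \<in> set cs")
    case True
    then obtain n where "n < length cs" "y = cs ! n" by (auto simp: in_set_conv_nth)
    then show ?thesis using assms(1)[of n] by simp
  next
    case False
    then show ?thesis by (rule assms(2))
  qed
qed

definition stride_step :: "nat \<Rightarrow> nat \<Rightarrow> nat"
  where "stride_step a i = (if a dvd i then i + a else i)"

lemma stride_step_add_self: "stride_step a (i + a) = stride_step a i + a"
  by (simp add: stride_step_def)

lemma eq_double_if_dvd_double: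
  fixes a k :: nat
  assumes "0 < a" "a < k" "a dvd k" "k dvd 2 * a"
  shows "k = 2 * a"
proof -
  obtain q where q: "k = a * q" using \<open>a dvd k\<close> ..
  obtain r where "2 * a = k * r" using \<open>k dvd 2 * a\<close> ..
  with q \<open>0 < a\<close> have "q * r = 2" by simp
  moreover have "1 < q"
  proof (rule ccontr)
    assume "\<not> 1 < q"
    then have "k \<le> a" using q by (cases q) auto
    with \<open>a < k\<close> show False by simp
  qed
  moreover have "q \<le> 2" using \<open>q * r = 2\<close> by (metis dvd_imp_le dvd_triv_left zero_less_numeral)
  ultimately have "q = 2" by simp
  with q show ?thesis by simp
qed

lemma ex_one_or_two_not_dvd:
  fixes a l :: nat
  assumes "3 \<le> a"
  obtains i where "i \<in> {1, 2}" "\<not> a dvd i" "\<not> a dvd (i + l)"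
proof -
  have small: "\<not> a dvd i" if "i \<in> {1, 2}" for i
    using that assms by (auto dest: dvd_imp_le)
  have "\<not> a dvd (1 + l) \<or> \<not> a dvd (2 + l)"
    using small[of 1] dvd_diff_nat[of a "2 + l" "1 + l"] by auto
  then show ?thesis using that small by blast
qed

lemma dvd_if_stride_step_shift:
  fixes a k l j :: nat
  assumes "0 < a" "a < k" "a dvd k" "(k, a) \<noteq> (4, 2)"
    and shift: "\<And>i. stride_step a (i + l) mod k = (stride_step a i + j) mod k"
  shows "a dvd j"
proof -
  have shift_dvd: "int k dvd int (stride_step a (i + l)) - int (stride_step a i + j)" for i
  proof -
    have "int (stride_step a (i + l)) mod int k = int (stride_step a i + j) mod int k"
      using shift[of i] by (metis of_nat_mod)
    then show ?thesis by (simp only: mod_eq_dvd_iff)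
  qed
  show ?thesis
  proof (cases "a dvd l")
    case True
    with shift_dvd[of 0] have "int k dvd int l - int j" by (simp add: stride_step_def)
    then have "int a dvd int l - int j" using \<open>a dvd k\<close> by (meson dvd_trans int_dvd_int_iff)
    moreover have "int a dvd int l" using True by simp
    ultimately have "int a dvd int l - (int l - int j)" by (rule dvd_diff[rotated])
    then show ?thesis by simp
  next
    case False
    have at_0: "int k dvd int l - int a - int j"
      using shift_dvd[of 0] False by (simp add: stride_step_def algebra_simps)
    \<comment> \<open>the index \<open>-l\<close>, represented modulo \<open>k\<close>\<close>
    have kl: "(k - 1) * l + l = k * l" using assms(2) by (simp add: algebra_simps)
    moreover have "\<not> a dvd (k - 1) * l"
      using False \<open>a dvd k\<close> kl by (metis dvd_add_right_iff dvd_mult2)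
    ultimately have "int k dvd int (k * l + a) - int ((k - 1) * l + j)"
      using shift_dvd[of "(k - 1) * l"] \<open>a dvd k\<close> by (simp add: stride_step_def)
    also have "int (k * l + a) - int ((k - 1) * l + j) = int l + int a - int j"
      unfolding kl[symmetric] by simp
    finally have "int k dvd int l + int a - int j" .
    from dvd_diff[OF this at_0] have "int k dvd int (2 * a)" by simp
    then have "k dvd 2 * a" by (simp only: int_dvd_int_iff)
    with assms(1-3) have "k = 2 * a" by (rule eq_double_if_dvd_double)
    moreover have "a \<noteq> 1" using False by auto
    ultimately have "3 \<le> a" using assms(1,4) by auto
    then obtain i where "i \<in> {1, 2}" "\<not> a dvd i" "\<not> a dvd (i + l)"
      by (rule ex_one_or_two_not_dvd)
    then have "int k dvd int l - int j"
      using shift_dvd[of i] by (simp add: stride_step_def)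
    from dvd_diff[OF this at_0] have "k dvd a" by simp
    then show ?thesis using assms(1,2) by (simp add: nat_dvd_not_less)
  qed
qed

definition stride_list :: "nat \<Rightarrow> 'a list \<Rightarrow> 'a list"
  where "stride_list a cs = map (\<lambda>t. cs ! (t * a)) [0..<length cs div a]"

lemma stride_list_index_less:
  assumes "t < length cs div a"
  shows "t * a < length cs"
proof -
  have "0 < a" using assms by (metis neq0_conv less_nat_zero_code div_by_0)
  moreover have "Suc t \<le> length cs div a" using assms by simp
  ultimately have "Suc t * a \<le> length cs" using less_eq_div_iff_mult_less_eq by blast
  with \<open>0 < a\<close> show ?thesis by simp
qed

lemma set_stride_list_subset: "set (stride_list a cs) \<subseteq> set cs"
  by (auto simp: stride_list_def intro!: nth_mem stride_list_index_less)

lemma distinct_stride_list: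
  assumes "distinct cs"
  shows "distinct (stride_list a cs)"
  unfolding stride_list_def distinct_map
proof (intro conjI inj_onI)
  fix t t' assume "t \<in> set [0..<length cs div a]" "t' \<in> set [0..<length cs div a]"
    and "cs ! (t * a) = cs ! (t' * a)"
  moreover have "t * a < length cs" "t' * a < length cs"
    using \<open>t \<in> _\<close> \<open>t' \<in> _\<close> stride_list_index_less by auto
  ultimately have "t * a = t' * a" using assms nth_eq_iff_index_eq by blast
  moreover from \<open>t \<in> set [0..<length cs div a]\<close> have "a \<noteq> 0"
    by (metis atLeastLessThan_iff div_by_0 less_nat_zero_code set_upt)
  ultimately show "t = t'" by simp
qed simp

lemma cycle_of_stride_list_nth_mod:
  assumes "distinct cs" "cs \<noteq> []" "a dvd length cs"
  shows "cycle_of_list (stride_list a cs) (cs ! (i mod length cs))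
           = cs ! (stride_step a i mod length cs)"
proof (cases "a dvd i")
  case True
  define k n where "k = length cs" and "n = length cs div a"
  have "0 < a" using assms(2,3) by (auto intro: gr0I)
  then have kn: "k = n * a" using assms(3) by (simp add: k_def n_def)
  obtain t where t: "i mod k = t * a"
    using True assms(3) by (metis dvd_mod dvd_def k_def mult.commute)
  have "t < n"
    using t kn assms(2) \<open>0 < a\<close>
    by (metis k_def length_greater_0_conv mod_less_divisor mult_less_cancel2)
  have ds: "stride_list a cs ! t' = cs ! (t' * a)" if "t' < n" for t'
    using that by (simp add: stride_list_def n_def)
  have "cycle_of_list (stride_list a cs) (stride_list a cs ! (t mod n))
          = stride_list a cs ! ((t + 1) mod n)"
    using cycle_of_list_funpow_nth_mod[of "stride_list a cs" 1 t] distinct_stride_list[OF assms(1)]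
      \<open>t < n\<close> by (simp add: stride_list_def n_def)
  also have "\<dots> = cs ! (((t + 1) mod n) * a)"
    using \<open>t < n\<close> ds by simp
  also have "((t + 1) mod n) * a = ((t + 1) * a) mod k"
    unfolding kn by (rule mod_mult_mult2[symmetric])
  also have "(t + 1) * a = i mod k + a" using t by simp
  finally show ?thesis
    using True \<open>t < n\<close> ds t by (simp add: k_def stride_step_def mod_add_left_eq)
next
  case False
  have "cs ! (i mod length cs) \<notin> set (stride_list a cs)"
  proof
    assume "cs ! (i mod length cs) \<in> set (stride_list a cs)"
    then obtain t where "t < length cs div a" "cs ! (i mod length cs) = cs ! (t * a)"
      by (auto simp: stride_list_def)
    moreover have "i mod length cs < length cs" "t * a < length cs"
      using assms(2) \<open>t < length cs div a\<close> stride_list_index_less by auto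
    ultimately have "i mod length cs = t * a" using assms(1) nth_eq_iff_index_eq by blast
    with False assms(3) show False by (metis dvd_mod_iff dvd_triv_right)
  qed
  with False show ?thesis by (simp add: id_outside_supp stride_step_def)
qed

lemma cycle_inter_conj_transpose:
  assumes "distinct cs" "cs \<noteq> []" "set cs \<subseteq> {1..m}" "p \<in> {1..m}" "p \<notin> set cs"
  shows "generate (sym_group m) {cycle_of_list cs}
           \<inter> conj_set (sym_group m) (generate (sym_group m) {cycle_of_list cs})
               (Transposition.transpose (cs ! 0) p)
         = generate (sym_group m) {cycle_of_list cs [^]\<^bsub>sym_group m\<^esub> length cs}"
proof (rule sym_group_generate_inter_conj_set_eq_generate_pow)
  let ?s = "cycle_of_list cs" and ?x = "Transposition.transpose (cs ! 0) p"
  have c0: "cs ! 0 \<in> set cs" using assms(2) by simp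
  show "?s \<in> carrier (sym_group m)" using assms(3) by (rule cycle_of_list_in_sym_group)
  show "?x \<in> carrier (sym_group m)"
    by (intro transpose_in_sym_group) (use c0 assms(3,4) in auto)
  have "?s ^^ length cs = id"
    by (rule fun_eq_on_cycleI[where cs = cs])
      (simp_all add: assms cycle_of_list_funpow_nth_mod cycle_of_list_funpow_outside)
  then show "?x \<circ> ?s ^^ length cs = ?s ^^ length cs \<circ> ?x" by simp
  fix j l :: nat assume "?x \<circ> ?s ^^ l = ?s ^^ j \<circ> ?x"
  then have "?x ((?s ^^ l) p) = (?s ^^ j) (?x p)" by (metis comp_apply)
  then have "cs ! (0 mod length cs) = cs ! ((0 + j) mod length cs)"
    using assms c0 cycle_of_list_funpow_nth_mod[OF assms(1,2), of j 0]
    by (auto simp: cycle_of_list_funpow_outside)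
  then have "0 mod length cs = j mod length cs"
    by (simp only: nth_mod_length_eq_iff[OF assms(1,2)] add_0)
  then show "length cs dvd j" by (simp add: mod_eq_0_iff_dvd)
qed

lemma cycle_inter_conj_stride:
  assumes "distinct cs" "set cs \<subseteq> {1..m}"
    and "0 < a" "a < length cs" "a dvd length cs" "(length cs, a) \<noteq> (4, 2)"
  shows "generate (sym_group m) {cycle_of_list cs}
           \<inter> conj_set (sym_group m) (generate (sym_group m) {cycle_of_list cs})
               (cycle_of_list (stride_list a cs))
         = generate (sym_group m) {cycle_of_list cs [^]\<^bsub>sym_group m\<^esub> a}"
proof (rule sym_group_generate_inter_conj_set_eq_generate_pow)
  let ?s = "cycle_of_list cs" and ?x = "cycle_of_list (stride_list a cs)"
  have "cs \<noteq> []" using assms(4) by auto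
  note s_nth = cycle_of_list_funpow_nth_mod[OF assms(1) this]
    and x_nth = cycle_of_stride_list_nth_mod[OF assms(1) this assms(5)]
  have x_out: "?x y = y" if "y \<notin> set cs" for y
    using that set_stride_list_subset by (metis id_outside_supp subsetD)
  show "?s \<in> carrier (sym_group m)" using assms(2) by (rule cycle_of_list_in_sym_group)
  show "?x \<in> carrier (sym_group m)"
    using assms(2) set_stride_list_subset by (metis cycle_of_list_in_sym_group order_trans)
  show "?x \<circ> ?s ^^ a = ?s ^^ a \<circ> ?x"
    by (rule fun_eq_on_cycleI[where cs = cs])
      (simp_all add: s_nth x_nth x_out stride_step_add_self cycle_of_list_funpow_outside)
  fix j l :: nat assume "?x \<circ> ?s ^^ l = ?s ^^ j \<circ> ?x"
  then have "?x ((?s ^^ l) (cs ! (i mod length cs)))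
              = (?s ^^ j) (?x (cs ! (i mod length cs)))" for i
    by (metis comp_apply)
  then have "stride_step a (i + l) mod length cs = (stride_step a i + j) mod length cs" for i
    using assms(1) \<open>cs \<noteq> []\<close> by (simp add: s_nth x_nth nth_mod_length_eq_iff)
  with assms(3-6) show "a dvd j" by (rule dvd_if_stride_step_shift)
qed

theorem lemma3p5:
  fixes m k a :: nat and cs :: "nat list" and s :: "nat \<Rightarrow> nat"
  assumes "0 < m"
    and "cycle cs" and "set cs \<subseteq> {1..m}" and "length cs = k"
    and "s = cycle_of_list cs"
    and "k < m"
    and "0 < a" and "a dvd k" and "(k, a) \<noteq> (4, 2)"
  shows "\<exists>x \<in> carrier (sym_group m).
           generate (sym_group m) {s} \<inter> conj_set (sym_group m) (generate (sym_group m) {s}) x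
             = generate (sym_group m) {s [^]\<^bsub>sym_group m\<^esub> a}"
proof -
  interpret G: group "sym_group m" by (rule sym_group_is_group)
  consider (trivial) "k = 0" | (full) "0 < k" "a = k" | (stride) "a < k"
    using \<open>0 < a\<close> \<open>a dvd k\<close> by (metis dvd_imp_le le_neq_implies_less not_gr0)
  then show ?thesis
  proof cases
    case trivial
    with assms(4,5) have "s = \<one>\<^bsub>sym_group m\<^esub>" by (simp add: sym_group_one)
    then show ?thesis
      by (intro bexI[of _ "\<one>\<^bsub>sym_group m\<^esub>"]) (simp_all add: conj_set_def G.generate_one)
  next
    case full
    have "card (set cs) < card {1..m}" using assms(2,4,6) by (simp add: distinct_card)
    then obtain p where "p \<in> {1..m}" "p \<notin> set cs"
      using assms(3) by (metis card_mono finite_atLeastAtMost not_le subsetI subset_antisym)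
    moreover have "cs ! 0 \<in> {1..m}" using full assms(3,4) nth_mem by blast
    ultimately show ?thesis
      using cycle_inter_conj_transpose[of cs m p] full assms(2-5)
      by (intro bexI[of _ "Transposition.transpose (cs ! 0) p"] transpose_in_sym_group) auto
  next
    case stride
    show ?thesis
      using cycle_inter_conj_stride[of cs m a] stride assms(2-5,7-9)
        cycle_of_list_in_sym_group[OF order_trans[OF set_stride_list_subset assms(3)]]
      by blast
  qed
qed

end
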